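(* Let $\odot$ be a pseudo-multiplication and let $\nu,\tau$ be $\sigma$-maxitive measures on a $\sigma$-algebra $\mathcal{B}$ on a nonempty set $E$. Assume that $\nu$ is semi-$\odot$-finite and that $\nu$ admits a density $c$ with respect to $\tau$. Then $\nu$ admits a density with respect to $\tau$ taking only $\odot$-finite values.
   Context: Write $\overline{\mathbb{R}}_+=[0,\infty]$ and $\oplus$ for the supremum. A pseudo-multiplication is a binary operation $\odot$ on $\overline{\mathbb{R}}_+$ with the following properties: - it is associative; - it is continuous on $(0,\infty)\times[0,\infty]$; - for every $t$, the map $s\mapsto s\odot t$ is continuous on $(0,\infty]$; - it is nondecreasing in each argument; - it has a left identity $1_\odot$, i.e. $1_\odot\odot t=t$ for all $t$; - it has no zero divisors, i.e. $s\odot t=0$ implies $s=0$ or $t=0$; - $0\odot t=t\odot 0=0$ for all $t$. Put $O(t)=\inf_{s>0}s\odot t$. An element $t$ is $\odot$-finite if $O(t)=0$, and $\odot$-infinite otherwise. A $\sigma$-maxitive measure on $\mathcal{B}$ is a map $\nu:\mathcal{B}\to\overline{\mathbb{R}}_+$ with $\nu(\emptyset)=0$ and $\nu(\bigcup_{j\in J}B_j)=\sup_{j\in J}\nu(B_j)$ for every countable family $(B_j)$ in $\mathcal{B}$. A map $f:E\to\overline{\mathbb{R}}_+$ is $\mathcal{B}$-measurable if $\{f>t\}\in\mathcal{B}$ for all $t\in[0,\infty)$. The idempotent $\odot$-integral is $\int^\infty_B f\odot d\tau=\sup_{t\in[0,\infty)}t\odot\tau(B\cap\{f>t\})$. $\nu$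 has a density with respect to $\tau$ if there is a $\mathcal{B}$-measurable $c:E\to\overline{\mathbb{R}}_+$ with $\nu(B)=\int^\infty_B c\odot d\tau$ for all $B\in\mathcal{B}$. $\nu$ is semi-$\odot$-finite if, for all $B\in\mathcal{B}$, $\nu(B)=\sup\{\nu(A):A\in\mathcal{B},\,A\subset B,\,\nu(A)\text{ is }\odot\text{-finite}\}$. *)

theory Defs
  imports "HOL-Analysis.Analysis"
begin

definition pseudo_mult :: "(ennreal \<Rightarrow> ennreal \<Rightarrow> ennreal) \<Rightarrow> bool" where
  "pseudo_mult m \<longleftrightarrow>
     (\<forall>r s t. m (m r s) t = m r (m s t)) \<and>
     continuous_on ({0<..<top} \<times> UNIV) (\<lambda>(s, t). m s t) \<and>
     (\<forall>t. continuous_on {0<..} (\<lambda>s. m s t)) \<and>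
     (\<forall>s s' t. s \<le> s' \<longrightarrow> m s t \<le> m s' t) \<and>
     (\<forall>s t t'. t \<le> t' \<longrightarrow> m s t \<le> m s t') \<and>
     (\<exists>e. \<forall>t. m e t = t) \<and>
     (\<forall>s t. m s t = 0 \<longrightarrow> s = 0 \<or> t = 0) \<and>
     (\<forall>t. m 0 t = 0 \<and> m t 0 = 0)"

definition O_of :: "(ennreal \<Rightarrow> ennreal \<Rightarrow> ennreal) \<Rightarrow> ennreal \<Rightarrow> ennreal" where
  "O_of m t = (INF s\<in>{0<..}. m s t)"

definition odot_finite :: "(ennreal \<Rightarrow> ennreal \<Rightarrow> ennreal) \<Rightarrow> ennreal \<Rightarrow> bool" where
  "odot_finite m t \<longleftrightarrow> O_of m t = 0"

definition sigma_maxitive :: "'a set set \<Rightarrow> ('a set \<Rightarrow> ennreal) \<Rightarrow> bool" where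
  "sigma_maxitive B \<nu> \<longleftrightarrow> \<nu> {} = 0 \<and>
     (\<forall>F. countable F \<longrightarrow> F \<subseteq> B \<longrightarrow> \<nu> (\<Union>F) = (SUP A\<in>F. \<nu> A))"

definition B_measurable :: "'a set \<Rightarrow> 'a set set \<Rightarrow> ('a \<Rightarrow> ennreal) \<Rightarrow> bool" where
  "B_measurable E B f \<longleftrightarrow> (\<forall>t::real. t \<ge> 0 \<longrightarrow> {x\<in>E. f x > ennreal t} \<in> B)"

definition idem_integral ::
  "(ennreal \<Rightarrow> ennreal \<Rightarrow> ennreal) \<Rightarrow> 'a set \<Rightarrow> ('a set \<Rightarrow> ennreal) \<Rightarrow> ('a \<Rightarrow> ennreal) \<Rightarrow> 'a set \<Rightarrow> ennreal" where
  "idem_integral m E \<tau> f A = (SUP t\<in>{t::real. t \<ge> 0}. m (ennreal t) (\<tau> (A \<inter> {x\<in>E. f x > ennreal t})))"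

definition has_density ::
  "(ennreal \<Rightarrow> ennreal \<Rightarrow> ennreal) \<Rightarrow> 'a set \<Rightarrow> 'a set set \<Rightarrow> ('a set \<Rightarrow> ennreal) \<Rightarrow> ('a set \<Rightarrow> ennreal) \<Rightarrow> ('a \<Rightarrow> ennreal) \<Rightarrow> bool" where
  "has_density m E B \<nu> \<tau> c \<longleftrightarrow> B_measurable E B c \<and> (\<forall>A\<in>B. \<nu> A = idem_integral m E \<tau> c A)"

definition semi_odot_finite ::
  "(ennreal \<Rightarrow> ennreal \<Rightarrow> ennreal) \<Rightarrow> 'a set set \<Rightarrow> ('a set \<Rightarrow> ennreal) \<Rightarrow> bool" where
  "semi_odot_finite m B \<nu> \<longleftrightarrow>
     (\<forall>A\<in>B. \<nu> A = (SUP A'\<in>{A'\<in>B. A' \<subseteq> A \<and> odot_finite m (\<nu> A')}. \<nu> A'))"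

end

theory Submission
  imports Defs
begin

text \<open>Let \<open>F\<close> be the set where the density \<open>c\<close> is \<open>\<odot>\<close>-infinite and let \<open>c'\<close> be \<open>c\<close> with
  its values on \<open>F\<close> replaced by \<open>0\<close>; then \<open>\<integral>\<^sub>A c' \<odot> d\<tau> = \<nu>(A - F)\<close>. If a measurable
  \<open>D \<subseteq> F\<close> had \<open>\<nu>(D)\<close> \<open>\<odot>\<close>-finite but nonzero, then \<open>\<tau>(D) > 0\<close>, and on a subset \<open>C\<close> of
  positive \<open>\<tau>\<close>-measure \<open>c\<close> would be bounded below by an \<open>\<odot>\<close>-infinite level \<open>t\<^sub>0\<close>; hence
  \<open>\<nu>(D) \<ge> r \<odot> \<tau>(C)\<close> for all \<open>r < t\<^sub>0\<close>, and associativity together with continuity of \<open>\<odot>\<close> turns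
  this into \<open>O(\<nu>(D)) > 0\<close>, a contradiction. So every \<open>\<odot>\<close>-finite part of \<open>F\<close> is \<open>\<nu>\<close>-null,
  and semi-\<open>\<odot>\<close>-finiteness gives \<open>\<nu>(A) = \<nu>(A - F)\<close>.\<close>

lemma
  assumes "pseudo_mult m"
  shows pseudo_mult_assoc: "m (m r s) t = m r (m s t)"
    and pseudo_mult_mono_left: "s \<le> s' \<Longrightarrow> m s t \<le> m s' t"
    and pseudo_mult_mono_right: "t \<le> t' \<Longrightarrow> m s t \<le> m s t'"
    and pseudo_mult_eq_0_iff: "m s t = 0 \<longleftrightarrow> s = 0 \<or> t = 0"
    and pseudo_mult_zero_right: "m s 0 = 0"
    and pseudo_mult_continuous: "continuous_on ({0<..<top} \<times> UNIV) (\<lambda>(s, t). m s t)"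
  using assms unfolding pseudo_mult_def by auto

lemma continuous_on_pseudo_mult_right:
  assumes "pseudo_mult m" "0 < s" "s < top"
  shows "continuous_on UNIV (m s)"
proof -
  have "continuous_on UNIV (\<lambda>t. (\<lambda>(s, t). m s t) (s, t))"
    by (rule continuous_on_compose2[OF pseudo_mult_continuous[OF assms(1)]])
      (auto intro!: continuous_intros simp: assms)
  then show ?thesis by simp
qed

lemma odot_finite_zero:
  assumes "pseudo_mult m"
  shows "odot_finite m 0"
proof -
  have "({0<..} :: ennreal set) \<noteq> {}" using zero_less_one by blast
  then show ?thesis
    unfolding odot_finite_def O_of_def by (simp add: pseudo_mult_zero_right[OF assms])
qed

lemma odot_finite_le:
  assumes "pseudo_mult m" "t \<le> t'" "odot_finite m t'"
  shows "odot_finite m t"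
proof -
  have "O_of m t \<le> O_of m t'"
    unfolding O_of_def by (rule INF_mono) (auto intro: pseudo_mult_mono_right[OF assms(1,2)])
  then show ?thesis using assms(3) unfolding odot_finite_def by simp
qed

text \<open>For \<open>0 < b < O(t\<^sub>0)\<close> and \<open>s > 0\<close>, continuity of \<open>s' \<odot> -\<close> at \<open>t\<^sub>0\<close>, where \<open>s' = min s 1\<close> is
  finite, gives \<open>t < t\<^sub>0\<close> with \<open>b < s' \<odot> t\<close>; so \<open>b \<odot> u \<le> s' \<odot> (t \<odot> u) \<le> s \<odot> v\<close>, whence
  \<open>O(v) \<ge> b \<odot> u > 0\<close>.\<close>
lemma odot_infinite_if_dominates:
  assumes pm: "pseudo_mult m" and t0: "\<not> odot_finite m t0" and u: "u > 0"
    and v: "\<And>r. 0 \<le> r \<Longrightarrow> ennreal r < t0 \<Longrightarrow> m (ennreal r) u \<le> v"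
  shows "\<not> odot_finite m v"
proof -
  obtain b where b: "0 < b" "b < O_of m t0"
    using dense t0 unfolding odot_finite_def by (metis not_gr_zero)
  have "0 < t0"
    using t0 odot_finite_zero[OF pm] by (metis not_gr_zero)
  have "m b u \<le> m s v" if "0 < s" for s
  proof -
    define s' where "s' = min s 1"
    have s': "0 < s'" "s' \<le> s" "s' < top"
      using \<open>0 < s\<close> order.strict_trans1[OF _ ennreal_one_less_top, of s']
      unfolding s'_def by (auto simp: min_def)
    have "O_of m t0 \<le> m s' t0"
      unfolding O_of_def by (rule INF_lower) (simp add: s')
    with b have "t0 \<in> m s' -` {b<..}" by auto
    moreover have "open (m s' -` {b<..})"
      by (rule open_vimage[OF _ continuous_on_pseudo_mult_right[OF pm s'(1,3)]]) simp
    ultimately obtain a where a: "a < t0" "{a<..t0} \<subseteq> m s' -` {b<..}"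
      using open_left \<open>0 < t0\<close> by blast
    obtain t where t: "a < t" "t < t0" using dense a(1) by blast
    then have "t \<in> {a<..t0}" by simp
    then have "b < m s' t" using a(2) by auto
    obtain r where r: "t = ennreal r" "0 \<le> r"
      using t by (cases t) auto
    have "m b u \<le> m (m s' t) u"
      using \<open>b < m s' t\<close> by (intro pseudo_mult_mono_left[OF pm]) simp
    also have "\<dots> = m s' (m t u)" by (rule pseudo_mult_assoc[OF pm])
    also have "\<dots> \<le> m s' v"
      using v[OF r(2)] t r by (intro pseudo_mult_mono_right[OF pm]) simp
    also have "\<dots> \<le> m s v" using s' by (intro pseudo_mult_mono_left[OF pm])
    finally show ?thesis .
  qed
  then have "m b u \<le> O_of m v"
    unfolding O_of_def by (intro INF_greatest) auto
  moreover have "0 < m b u"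
    using b u by (simp add: pseudo_mult_eq_0_iff[OF pm] zero_less_iff_neq_zero)
  ultimately show ?thesis unfolding odot_finite_def by simp
qed

lemma up_closed_eq_atLeast_or_greaterThan:
  fixes I :: "'a::complete_linorder set"
  assumes "\<And>t t'. t \<in> I \<Longrightarrow> t \<le> t' \<Longrightarrow> t' \<in> I"
  shows "I = {Inf I..} \<or> I = {Inf I<..}"
proof (cases "Inf I \<in> I")
  case True
  then have "I = {Inf I..}" using assms by (auto intro: Inf_lower)
  then show ?thesis ..
next
  case False
  have "I = {Inf I<..}"
  proof
    show "I \<subseteq> {Inf I<..}"
      using False by (auto simp: order.strict_iff_order intro: Inf_lower)
    show "{Inf I<..} \<subseteq> I"
      using assms by (auto simp: Inf_less_iff)
  qed
  then show ?thesis ..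
qed

lemma odot_infinite_borel:
  assumes "pseudo_mult m"
  shows "{t. \<not> odot_finite m t} \<in> sets borel"
proof -
  have "{t. \<not> odot_finite m t} = {Inf {t. \<not> odot_finite m t}..} \<or>
      {t. \<not> odot_finite m t} = {Inf {t. \<not> odot_finite m t}<..}"
    using odot_finite_le[OF assms] by (intro up_closed_eq_atLeast_or_greaterThan) blast
  then show ?thesis by (metis borel_closed borel_open closed_atLeast open_greaterThan)
qed

lemma sigma_maxitive_empty: "sigma_maxitive B \<mu> \<Longrightarrow> \<mu> {} = 0"
  unfolding sigma_maxitive_def by simp

lemma sigma_maxitive_UN:
  assumes "sigma_maxitive B \<mu>" "range X \<subseteq> B"
  shows "\<mu> (\<Union>i::nat. X i) = (SUP i. \<mu> (X i))"
  using assms unfolding sigma_maxitive_def by (simp add: image_image)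

lemma sigma_maxitive_Un:
  assumes "sigma_maxitive B \<mu>" "X \<in> B" "Y \<in> B"
  shows "\<mu> (X \<union> Y) = sup (\<mu> X) (\<mu> Y)"
proof -
  have "\<mu> (\<Union>{X, Y}) = (SUP A\<in>{X, Y}. \<mu> A)"
    using assms(2,3) by (intro conjunct2[OF assms(1)[unfolded sigma_maxitive_def], rule_format]) auto
  then show ?thesis by simp
qed

lemma sigma_maxitive_mono:
  assumes "sigma_maxitive B \<mu>" "X \<in> B" "Y \<in> B" "X \<subseteq> Y"
  shows "\<mu> X \<le> \<mu> Y"
  using sigma_maxitive_Un[OF assms(1-3)] assms(4) by (simp add: sup.absorb_iff2 Un_absorb1)

lemma B_measurable_level_set:
  "B_measurable E B c \<Longrightarrow> 0 \<le> t \<Longrightarrow> {x\<in>E. ennreal t < c x} \<in> B"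
  unfolding B_measurable_def by blast

lemma B_measurable_vimage_borel:
  assumes "sigma_algebra E B" "B_measurable E B c" "S \<in> sets borel"
  shows "{x\<in>E. c x \<in> S} \<in> B"
proof -
  interpret sigma_algebra E B by (rule assms(1))
  define M where "M = measure_of E B (\<lambda>_. 0::ennreal)"
  have M: "sets M = B" "space M = E"
    unfolding M_def using space_closed by (auto simp: sets_measure_of space_measure_of_conv)
  have "c \<in> borel_measurable M"
  proof (rule borel_measurableI_greater)
    fix y :: ennreal
    show "{x \<in> space M. y < c x} \<in> sets M"
      using B_measurable_level_set[OF assms(2)] sets_into_space
      by (cases y rule: ennreal_cases) (auto simp: M)
  qed
  from measurable_sets[OF this assms(3)] show ?thesis
    by (simp add: M vimage_def Int_def conj_commute)
qed

lemma B_measurable_zero_on: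
  assumes "sigma_algebra E B" "B_measurable E B c" "F \<in> B"
  shows "B_measurable E B (\<lambda>x. if x \<in> F then 0 else c x)"
  unfolding B_measurable_def
proof (intro allI impI)
  interpret sigma_algebra E B by (rule assms(1))
  fix t :: real assume "0 \<le> t"
  have "{x\<in>E. ennreal t < (if x \<in> F then 0 else c x)} = {x\<in>E. ennreal t < c x} - F"
    by auto
  then show "{x\<in>E. ennreal t < (if x \<in> F then 0 else c x)} \<in> B"
    using B_measurable_level_set[OF assms(2) \<open>0 \<le> t\<close>] assms(3)
    by (simp add: Diff)
qed

lemma idem_integral_zero_on:
  "idem_integral m E \<tau> (\<lambda>x. if x \<in> F then 0 else c x) A = idem_integral m E \<tau> c (A - F)"
  unfolding idem_integral_def
proof (rule SUP_cong)
  fix t assume "t \<in> {t::real. 0 \<le> t}"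
  then have "A \<inter> {x\<in>E. ennreal t < (if x \<in> F then 0 else c x)} = (A - F) \<inter> {x\<in>E. ennreal t < c x}"
    by auto
  then show "m (ennreal t) (\<tau> (A \<inter> {x\<in>E. ennreal t < (if x \<in> F then 0 else c x)}))
           = m (ennreal t) (\<tau> ((A - F) \<inter> {x\<in>E. ennreal t < c x}))"
    by simp
qed simp

lemma idem_integral_ge:
  assumes "0 \<le> r" "C \<subseteq> A \<inter> {x\<in>E. ennreal r < c x}" "pseudo_mult m"
    and "sigma_maxitive B \<tau>" "C \<in> B" "A \<inter> {x\<in>E. ennreal r < c x} \<in> B"
  shows "m (ennreal r) (\<tau> C) \<le> idem_integral m E \<tau> c A"
proof -
  have "m (ennreal r) (\<tau> C) \<le> m (ennreal r) (\<tau> (A \<inter> {x\<in>E. ennreal r < c x}))"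
    using sigma_maxitive_mono[OF assms(4-6,2)] by (rule pseudo_mult_mono_right[OF assms(3)])
  also have "\<dots> \<le> idem_integral m E \<tau> c A"
    unfolding idem_integral_def using assms(1) by (intro SUP_upper) auto
  finally show ?thesis .
qed

lemma idem_integral_null:
  assumes "pseudo_mult m" "sigma_algebra E B" "sigma_maxitive B \<tau>" "B_measurable E B c"
    and "A \<in> B" "\<tau> A = 0"
  shows "idem_integral m E \<tau> c A = 0"
proof -
  interpret sigma_algebra E B by (rule assms(2))
  have "m (ennreal t) (\<tau> (A \<inter> {x\<in>E. ennreal t < c x})) = 0" if "0 \<le> t" for t
  proof -
    have "\<tau> (A \<inter> {x\<in>E. ennreal t < c x}) \<le> \<tau> A"
      using assms(5) B_measurable_level_set[OF assms(4) that]
      by (intro sigma_maxitive_mono[OF assms(3)]) auto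
    then show ?thesis using assms(6) by (simp add: pseudo_mult_eq_0_iff[OF assms(1)])
  qed
  then have "idem_integral m E \<tau> c A \<le> 0"
    unfolding idem_integral_def by (intro SUP_least) auto
  then show ?thesis by simp
qed

text \<open>\<open>D\<close> is the countable union of the sets \<open>D \<inter> {\<theta> + 1/(n+1) < c}\<close>, so by
  \<open>\<sigma>\<close>-maxitivity one of them has positive measure.\<close>
lemma sigma_maxitive_uniform_lower_bound:
  assumes "sigma_algebra E B" "sigma_maxitive B \<tau>" "B_measurable E B c"
    and D: "D \<in> B" "0 < \<tau> D" "\<forall>x\<in>D. \<theta> < c x"
  obtains C t where "C \<in> B" "C \<subseteq> D" "0 < \<tau> C" "\<theta> < t" "\<forall>x\<in>C. t \<le> c x"
proof -
  interpret sigma_algebra E B by (rule assms(1))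
  have "D \<noteq> {}" using D(2) sigma_maxitive_empty[OF assms(2)] by auto
  then have "\<theta> \<noteq> top" using D(3) by (metis all_not_in_conv top.extremum_strict)
  then obtain r where r: "\<theta> = ennreal r" "0 \<le> r" by (cases \<theta>) auto
  define t where "t n = ennreal (r + 1 / Suc n)" for n :: nat
  define Dn where "Dn n = D \<inter> {x\<in>E. t n < c x}" for n
  have "{x\<in>E. t n < c x} \<in> B" for n
    unfolding t_def by (rule B_measurable_level_set[OF assms(3)]) (use r(2) in simp)
  then have Dn: "Dn n \<in> B" for n
    unfolding Dn_def by (rule Int[OF D(1)])
  have "D \<subseteq> (\<Union>n. Dn n)"
  proof
    fix x assume x: "x \<in> D"
    then have "x \<in> E" "ennreal r < c x" using D(1,3) sets_into_space r by auto
    obtain n where "t n < c x"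
    proof (cases "c x" rule: ennreal_cases)
      case (real y)
      then have "r < y" using \<open>ennreal r < c x\<close> r(2) by (simp add: ennreal_less_iff)
      then obtain n where "inverse (real (Suc n)) < y - r"
        using reals_Archimedean[of "y - r"] by auto
      then have "r + 1 / Suc n < y" by (simp add: inverse_eq_divide)
      then have "t n < c x"
        unfolding t_def real using r(2) \<open>r < y\<close> by (intro ennreal_lessI) auto
      then show ?thesis by (rule that)
    qed (auto simp: t_def intro: that[of 0])
    then show "x \<in> (\<Union>n. Dn n)" using x \<open>x \<in> E\<close> unfolding Dn_def by auto
  qed
  then have "D = (\<Union>n. Dn n)" unfolding Dn_def by auto
  then have "\<tau> D = (SUP n. \<tau> (Dn n))"
    using sigma_maxitive_UN[OF assms(2)] Dn by auto
  with D(2) obtain n where "0 < \<tau> (Dn n)" by (auto simp: less_SUP_iff)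
  moreover have "\<theta> < t n"
    unfolding r t_def using r(2) by (intro ennreal_lessI) (auto intro: add_nonneg_pos)
  moreover have "\<forall>x\<in>Dn n. t n \<le> c x" unfolding Dn_def by auto
  ultimately show ?thesis
    using that[of "Dn n" "t n"] Dn by (auto simp: Dn_def)
qed

lemma density_null_on_odot_infinite:
  assumes pm: "pseudo_mult m" and "sigma_algebra E B" "sigma_maxitive B \<tau>"
    and dens: "has_density m E B \<nu> \<tau> c"
    and D: "D \<in> B" "\<forall>x\<in>D. \<not> odot_finite m (c x)" "odot_finite m (\<nu> D)"
  shows "\<nu> D = 0"
proof (rule ccontr)
  interpret sigma_algebra E B by (rule assms(2))
  assume "\<nu> D \<noteq> 0"
  have cm: "B_measurable E B c" and \<nu>: "\<nu> D = idem_integral m E \<tau> c D"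
    using dens D(1) unfolding has_density_def by auto
  have "0 < \<tau> D"
    using idem_integral_null[OF pm assms(2,3) cm D(1)] \<nu> \<open>\<nu> D \<noteq> 0\<close> by (metis not_gr_zero)
  obtain C t0 where C: "C \<in> B" "C \<subseteq> D" "0 < \<tau> C" "\<not> odot_finite m t0" "\<forall>x\<in>C. t0 \<le> c x"
  proof -
    define I where "I = {t. \<not> odot_finite m t}"
    have "I = {Inf I..} \<or> I = {Inf I<..}"
      unfolding I_def using odot_finite_le[OF pm]
      by (intro up_closed_eq_atLeast_or_greaterThan) blast
    then consider "Inf I \<in> I" | "\<forall>x\<in>D. Inf I < c x" "\<And>t. Inf I < t \<Longrightarrow> t \<in> I"
      using D(2) unfolding I_def by auto
    then show ?thesis
    proof cases
      case 1
      then show ?thesis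
        using that[of D "Inf I"] D \<open>0 < \<tau> D\<close> by (auto simp: I_def intro: Inf_lower)
    next
      case 2
      from sigma_maxitive_uniform_lower_bound[OF assms(2,3) cm D(1) \<open>0 < \<tau> D\<close> 2(1)]
      show ?thesis using that 2(2) unfolding I_def by (metis (mono_tags) mem_Collect_eq subset_trans)
    qed
  qed
  have "\<not> odot_finite m (\<nu> D)"
  proof (rule odot_infinite_if_dominates[OF pm C(4,3)])
    fix r :: real assume r: "0 \<le> r" "ennreal r < t0"
    have "C \<subseteq> D \<inter> {x\<in>E. ennreal r < c x}"
      using C(2,5) r(2) sets_into_space[OF D(1)]
      by (force intro: less_le_trans)
    then show "m (ennreal r) (\<tau> C) \<le> \<nu> D"
      unfolding \<nu> using B_measurable_level_set[OF cm r(1)] D(1) C(1)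
      by (intro idem_integral_ge[OF r(1) _ pm assms(3)]) auto
  qed
  then show False using D(3) by simp
qed

lemma semi_odot_finite_remove_null:
  assumes pm: "pseudo_mult m" and "sigma_algebra E B" and \<nu>: "sigma_maxitive B \<nu>"
    and "semi_odot_finite m B \<nu>" and F: "F \<in> B"
    and null: "\<And>D. D \<in> B \<Longrightarrow> D \<subseteq> F \<Longrightarrow> odot_finite m (\<nu> D) \<Longrightarrow> \<nu> D = 0"
    and A: "A \<in> B"
  shows "\<nu> A = \<nu> (A - F)"
proof (rule antisym)
  interpret sigma_algebra E B by (rule assms(2))
  have AF: "A - F \<in> B" by (rule Diff[OF A F])
  show "\<nu> (A - F) \<le> \<nu> A" by (rule sigma_maxitive_mono[OF \<nu> AF A Diff_subset])
  have finite_part: "\<nu> A' \<le> \<nu> (A - F)" if A': "A' \<in> B" "A' \<subseteq> A" "odot_finite m (\<nu> A')" for A'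
  proof -
    have "\<nu> (A' \<inter> F) \<le> \<nu> A'"
      by (rule sigma_maxitive_mono[OF \<nu> Int[OF A'(1) F] A'(1) Int_lower1])
    then have "\<nu> (A' \<inter> F) = 0"
      by (intro null Int[OF A'(1) F] Int_lower2 odot_finite_le[OF pm _ A'(3)])
    then have "\<nu> A' = \<nu> (A' - F)"
      using sigma_maxitive_Un[OF \<nu> Int[OF A'(1) F] Diff[OF A'(1) F]]
      by (simp add: Int_Diff_Un sup.absorb2)
    also have "\<dots> \<le> \<nu> (A - F)"
      using A'(2) by (intro sigma_maxitive_mono[OF \<nu> Diff[OF A'(1) F] AF]) blast
    finally show ?thesis .
  qed
  have "\<nu> A = (SUP A'\<in>{A'\<in>B. A' \<subseteq> A \<and> odot_finite m (\<nu> A')}. \<nu> A')"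
    using assms(4) A unfolding semi_odot_finite_def by blast
  also have "\<dots> \<le> \<nu> (A - F)"
    using finite_part by (intro SUP_least) blast
  finally show "\<nu> A \<le> \<nu> (A - F)" .
qed

theorem mainTheorem4:
  fixes m :: "ennreal \<Rightarrow> ennreal \<Rightarrow> ennreal"
    and E :: "'a set" and B :: "'a set set"
    and \<nu> \<tau> :: "'a set \<Rightarrow> ennreal" and c :: "'a \<Rightarrow> ennreal"
  assumes "pseudo_mult m"
    and "sigma_algebra E B" and "E \<noteq> {}"
    and "sigma_maxitive B \<nu>" and "sigma_maxitive B \<tau>"
    and "semi_odot_finite m B \<nu>"
    and "has_density m E B \<nu> \<tau> c"
  shows "\<exists>c'. has_density m E B \<nu> \<tau> c' \<and> (\<forall>x\<in>E. odot_finite m (c' x))"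
proof -
  interpret sigma_algebra E B by (rule assms(2))
  have cm: "B_measurable E B c" and dens: "\<And>A. A \<in> B \<Longrightarrow> \<nu> A = idem_integral m E \<tau> c A"
    using assms(7) unfolding has_density_def by auto
  define F where "F = {x\<in>E. c x \<in> {t. \<not> odot_finite m t}}"
  have F: "F \<in> B"
    unfolding F_def by (rule B_measurable_vimage_borel[OF assms(2) cm odot_infinite_borel[OF assms(1)]])
  define c' where "c' x = (if x \<in> F then 0 else c x)" for x
  have "\<nu> A = idem_integral m E \<tau> c' A" if "A \<in> B" for A
  proof -
    have "\<nu> A = \<nu> (A - F)"
      using density_null_on_odot_infinite[OF assms(1,2,5,7)]
      by (rule semi_odot_finite_remove_null[OF assms(1,2,4,6) F _ that]) (auto simp: F_def)
    also have "\<dots> = idem_integral m E \<tau> c' A"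
      unfolding c'_def idem_integral_zero_on using F that by (intro dens) auto
    finally show ?thesis .
  qed
  moreover have "B_measurable E B c'"
    unfolding c'_def by (rule B_measurable_zero_on[OF assms(2) cm F])
  moreover have "\<forall>x\<in>E. odot_finite m (c' x)"
    unfolding c'_def F_def using odot_finite_zero[OF assms(1)] by auto
  ultimately show ?thesis unfolding has_density_def by blast
qed

end
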